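(* Let $(\mathcal E,B,\mathcal L_{\mathcal P})$ be an epistemic space with $|\mathcal P|\ge2$. Any ES basic fusion operator that satisfies (ESF-SD), (ESF7), (ESF8W) and (ESF-I) also satisfies (ESF-D).
   Context: $[\![\phi]\!]$ denotes models; $\varphi_M$ a formula with models exactly $M$. Epistemic space: $\mathcal E$ nonempty, $B:\mathcal E\to\mathcal L_{\mathcal P}$ (propositional formulas over finite $\mathcal P$) with image modulo equivalence exactly the consistent formulas. Agents: well-ordered set $\mathcal S$; society: nonempty finite $N\subseteq\mathcal S$; $N$-profile $\Phi:N\to\mathcal E$, $E_i=\Phi(i)$, identified with $E_i$ if $N=\{i\}$; profiles on $\{i_1<\dots<i_n\}$, $\{j_1<\dots<j_m\}$ equivalent if $n=m$ and entries coincide position-wise; $\Phi\upharpoonright_M$ restriction; partition $\{N_1,N_2\}$: nonempty disjoint parts with union $N$. ES basic fusion operator: a map $\nabla(\Phi,E)\in\mathcal E$ with (ESF1) $B(\nabla(\Phi,E))\vdash B(E)$; (ESF2) equivalent profiles and $B(E)\equiv B(E')$ give equivalent $B(\nabla)$; (ESF3) if $B(E)\equiv B(E')\wedge B(E'')$ then $B(\nabla(\Phi,E'))\wedge B(E'')\vdash B(\nabla(\Phi,E))$; (ESF4) if moreover $B(\nabla(\Phi,E'))\wedge B(E'')\nvdash\bot$ then $B(\nabla(\Phi,E))\vdash B(\nabla(\Phi,E'))\wedge B(E'')$. (ESF7) $B(\nabla(\Phi\upharpoonright_{N_1},E))\wedge B(\nabla(\Phi\upharpoonright_{N_2},E))\vdash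 B(\nabla(\Phi,E))$; (ESF8W) if that conjunction is consistent then $B(\nabla(\Phi,E))\vdash B(\nabla(\Phi\upharpoonright_{N_1},E))\vee B(\nabla(\Phi\upharpoonright_{N_2},E))$. (ESF-SD): for every agent $i$, interpretations $w,w',w''$ and $E_{w,w'},E_{w',w''}$ with $[\![B(E_{w,w'})]\!]=\{w,w'\}$, $[\![B(E_{w',w''})]\!]=\{w',w''\}$, there exist $i$-profiles realising each of: (i) $B(\nabla(E_i,E_{w,w'}))\equiv\varphi_{w,w'}$ and $B(\nabla(E_i,E_{w',w''}))\equiv\varphi_{w',w''}$; (ii) $\equiv\varphi_{w,w'}$ and $\equiv\varphi_{w'}$; (iii) $\equiv\varphi_w$ and $\equiv\varphi_{w',w''}$; (iv) $\equiv\varphi_w$ and $\equiv\varphi_{w'}$. (ESF-I): for every $N$, $N$-profiles $\Phi,\Phi'$, $E$: if for every $E'$ with $B(E')\vdash B(E)$, $B(\nabla(E_j,E'))\equiv B(\nabla(E'_j,E'))$ for all $j\in N$, then $B(\nabla(\Phi,E))\equiv B(\nabla(\Phi',E))$. (ESF-D): for every society $N$ there exists $d_N\in N$ such that for every $N$-profile $\Phi$ and every $E$, $B(\nabla(\Phi,E))\vdash B(\nabla(E_{d_N},E))$. *)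

theory Defs
  imports Main
begin

datatype 'p form =
    Atom 'p
  | FBot
  | FNeg "'p form"
  | FConj "'p form" "'p form"
  | FDisj "'p form" "'p form"
  | FImp "'p form" "'p form"

type_synonym 'p interp = "'p \<Rightarrow> bool"

fun sat :: "'p interp \<Rightarrow> 'p form \<Rightarrow> bool" where
  "sat w (Atom p) = w p"
| "sat w FBot = False"
| "sat w (FNeg f) = (\<not> sat w f)"
| "sat w (FConj f g) = (sat w f \<and> sat w g)"
| "sat w (FDisj f g) = (sat w f \<or> sat w g)"
| "sat w (FImp f g) = (sat w f \<longrightarrow> sat w g)"

definition models :: "'p form \<Rightarrow> 'p interp set" where
  "models f = {w. sat w f}"

definition entails :: "'p form \<Rightarrow> 'p form \<Rightarrow> bool" where
  "entails f g \<longleftrightarrow> (\<forall>w. sat w f \<longrightarrow> sat w g)"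

definition equiv_form :: "'p form \<Rightarrow> 'p form \<Rightarrow> bool" where
  "equiv_form f g \<longleftrightarrow> entails f g \<and> entails g f"

definition consistent :: "'p form \<Rightarrow> bool" where
  "consistent f \<longleftrightarrow> \<not> entails f FBot"

text \<open>The set of epistemic states is the (nonempty) type 'e; B maps states to
formulas; the image of B modulo equivalence is exactly the consistent formulas.\<close>
definition epistemic_space :: "('e \<Rightarrow> 'p form) \<Rightarrow> bool" where
  "epistemic_space B \<longleftrightarrow>
     (\<forall>e. consistent (B e)) \<and> (\<forall>f. consistent f \<longrightarrow> (\<exists>e. equiv_form (B e) f))"

text \<open>Agents form the well-ordered type 'a. An N-profile is represented by a function 'a => 'e of which only the
values on N are relevant. A fusion operator is
  nabla :: 'a set => ('a => 'e) => 'e => 'e,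
where  nabla N Phi E  is the fusion of the N-profile Phi (restricted to N)
under integrity constraint E. Restriction of a profile to M is  nabla M Phi.
The single-agent profile E_i is the {i}-profile (\<lambda>_. E_i).\<close>

definition society :: "'a set \<Rightarrow> bool" where
  "society N \<longleftrightarrow> N \<noteq> {} \<and> finite N"

text \<open>Equivalent profiles: same length and the entries coincide position-wise
along the increasing enumerations of N and M.\<close>
definition equiv_profile ::
  "'a::linorder set \<Rightarrow> ('a \<Rightarrow> 'e) \<Rightarrow> 'a set \<Rightarrow> ('a \<Rightarrow> 'e) \<Rightarrow> bool" where
  "equiv_profile N Phi M Psi \<longleftrightarrow>
     map Phi (sorted_list_of_set N) = map Psi (sorted_list_of_set M)"

definition partition2 :: "'a set \<Rightarrow> 'a set \<Rightarrow> 'a set \<Rightarrow> bool" where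
  "partition2 N N1 N2 \<longleftrightarrow>
     N1 \<noteq> {} \<and> N2 \<noteq> {} \<and> N1 \<inter> N2 = {} \<and> N1 \<union> N2 = N"

definition es_basic_fusion ::
  "('e \<Rightarrow> 'p form) \<Rightarrow> ('a::linorder set \<Rightarrow> ('a \<Rightarrow> 'e) \<Rightarrow> 'e \<Rightarrow> 'e) \<Rightarrow> bool" where
  "es_basic_fusion B nabla \<longleftrightarrow>
     \<comment> \<open>ESF1\<close>
     (\<forall>N Phi E. society N \<longrightarrow> entails (B (nabla N Phi E)) (B E)) \<and>
     \<comment> \<open>ESF2\<close>
     (\<forall>N Phi M Psi E E'. society N \<longrightarrow> society M \<longrightarrow> equiv_profile N Phi M Psi \<longrightarrow>
        equiv_form (B E) (B E') \<longrightarrow> equiv_form (B (nabla N Phi E)) (B (nabla M Psi E'))) \<and>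
     \<comment> \<open>ESF3\<close>
     (\<forall>N Phi E E' E''. society N \<longrightarrow> equiv_form (B E) (FConj (B E') (B E'')) \<longrightarrow>
        entails (FConj (B (nabla N Phi E')) (B E'')) (B (nabla N Phi E))) \<and>
     \<comment> \<open>ESF4\<close>
     (\<forall>N Phi E E' E''. society N \<longrightarrow> equiv_form (B E) (FConj (B E') (B E'')) \<longrightarrow>
        consistent (FConj (B (nabla N Phi E')) (B E'')) \<longrightarrow>
        entails (B (nabla N Phi E)) (FConj (B (nabla N Phi E')) (B E'')))"

definition esf7 ::
  "('e \<Rightarrow> 'p form) \<Rightarrow> ('a set \<Rightarrow> ('a \<Rightarrow> 'e) \<Rightarrow> 'e \<Rightarrow> 'e) \<Rightarrow> bool" where
  "esf7 B nabla \<longleftrightarrow>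
     (\<forall>N N1 N2 Phi E. society N \<longrightarrow> partition2 N N1 N2 \<longrightarrow>
        entails (FConj (B (nabla N1 Phi E)) (B (nabla N2 Phi E))) (B (nabla N Phi E)))"

definition esf8w ::
  "('e \<Rightarrow> 'p form) \<Rightarrow> ('a set \<Rightarrow> ('a \<Rightarrow> 'e) \<Rightarrow> 'e \<Rightarrow> 'e) \<Rightarrow> bool" where
  "esf8w B nabla \<longleftrightarrow>
     (\<forall>N N1 N2 Phi E. society N \<longrightarrow> partition2 N N1 N2 \<longrightarrow>
        consistent (FConj (B (nabla N1 Phi E)) (B (nabla N2 Phi E))) \<longrightarrow>
        entails (B (nabla N Phi E)) (FDisj (B (nabla N1 Phi E)) (B (nabla N2 Phi E))))"

text \<open>(ESF-SD). The interpretations w, w', w'' are taken pairwise distinct.  "B(...) equivalent to phi_M" is rendered as "models (B ...) = M".\<close>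
definition esf_sd ::
  "('e \<Rightarrow> 'p form) \<Rightarrow> ('a set \<Rightarrow> ('a \<Rightarrow> 'e) \<Rightarrow> 'e \<Rightarrow> 'e) \<Rightarrow> bool" where
  "esf_sd B nabla \<longleftrightarrow>
     (\<forall>i w w' w'' E1 E2.
        w \<noteq> w' \<and> w' \<noteq> w'' \<and> w \<noteq> w'' \<longrightarrow>
        models (B E1) = {w, w'} \<longrightarrow> models (B E2) = {w', w''} \<longrightarrow>
        (\<exists>Ei. models (B (nabla {i} (\<lambda>_. Ei) E1)) = {w, w'} \<and>
              models (B (nabla {i} (\<lambda>_. Ei) E2)) = {w', w''}) \<and>
        (\<exists>Ei. models (B (nabla {i} (\<lambda>_. Ei) E1)) = {w, w'} \<and>
              models (B (nabla {i} (\<lambda>_. Ei) E2)) = {w'}) \<and>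
        (\<exists>Ei. models (B (nabla {i} (\<lambda>_. Ei) E1)) = {w} \<and>
              models (B (nabla {i} (\<lambda>_. Ei) E2)) = {w', w''}) \<and>
        (\<exists>Ei. models (B (nabla {i} (\<lambda>_. Ei) E1)) = {w} \<and>
              models (B (nabla {i} (\<lambda>_. Ei) E2)) = {w'}))"

definition esf_i ::
  "('e \<Rightarrow> 'p form) \<Rightarrow> ('a set \<Rightarrow> ('a \<Rightarrow> 'e) \<Rightarrow> 'e \<Rightarrow> 'e) \<Rightarrow> bool" where
  "esf_i B nabla \<longleftrightarrow>
     (\<forall>N Phi Phi' E. society N \<longrightarrow>
        (\<forall>E'. entails (B E') (B E) \<longrightarrow>
           (\<forall>j\<in>N. equiv_form (B (nabla {j} (\<lambda>_. Phi j) E')) (B (nabla {j} (\<lambda>_. Phi' j) E')))) \<longrightarrow>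
        equiv_form (B (nabla N Phi E)) (B (nabla N Phi' E)))"

definition esf_d ::
  "('e \<Rightarrow> 'p form) \<Rightarrow> ('a set \<Rightarrow> ('a \<Rightarrow> 'e) \<Rightarrow> 'e \<Rightarrow> 'e) \<Rightarrow> bool" where
  "esf_d B nabla \<longleftrightarrow>
     (\<forall>N. society N \<longrightarrow>
        (\<exists>d\<in>N. \<forall>Phi E. entails (B (nabla N Phi E)) (B (nabla {d} (\<lambda>_. Phi d) E))))"

end

theory Submission
  imports Defs
begin

text \<open>
  Identify an integrity constraint with its set of models. Fusion then turns into a family of
  choice functions on sets of interpretations: ESF1--ESF4 make each of them rationalisable
  (choosing from a subset that meets the chosen set yields the intersection), ESF7 and ESF8W
  give unanimity, ESF-I gives independence of irrelevant alternatives on pairs, and ESF-SD gives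
  individual agents a rich enough domain of strict and weak rankings of any three
  interpretations; with at least two atoms there are at least four interpretations.
  These are the hypotheses of Arrow's theorem, proved along Sen's lines: a group that is
  almost decisive for one pair is decisive for every pair, a decisive group can be split so
  that one part is still decisive, and iterating yields a dictator, whose fused beliefs then
  contain the collective ones.
\<close>

lemma entails_iff_models_subset: "entails f g \<longleftrightarrow> models f \<subseteq> models g"
  by (auto simp: entails_def models_def)

lemma equiv_form_iff_models_eq: "equiv_form f g \<longleftrightarrow> models f = models g"
  by (auto simp: equiv_form_def entails_def models_def)

lemma consistent_iff_models_nonempty: "consistent f \<longleftrightarrow> models f \<noteq> {}"
  by (auto simp: consistent_def entails_def models_def)

lemma models_FConj [simp]: "models (FConj f g) = models f \<inter> models g"
  and models_FDisj [simp]: "models (FDisj f g) = models f \<union> models g"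
  by (auto simp: models_def)

fun conj_list :: "'p form list \<Rightarrow> 'p form" where
  "conj_list [] = FNeg FBot"
| "conj_list (f # fs) = FConj f (conj_list fs)"

fun disj_list :: "'p form list \<Rightarrow> 'p form" where
  "disj_list [] = FBot"
| "disj_list (f # fs) = FDisj f (disj_list fs)"

lemma sat_conj_list: "sat w (conj_list fs) \<longleftrightarrow> (\<forall>f\<in>set fs. sat w f)"
  by (induction fs) auto

lemma sat_disj_list: "sat w (disj_list fs) \<longleftrightarrow> (\<exists>f\<in>set fs. sat w f)"
  by (induction fs) auto

lemma ex_form_models: "\<exists>f. models f = (M :: 'p::finite interp set)"
proof -
  obtain ps :: "'p list" where ps: "set ps = UNIV"
    using finite_list[OF finite_UNIV] by blast
  obtain ws where ws: "set ws = M"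
    using finite_list[of M] by auto
  define char :: "'p interp \<Rightarrow> 'p form" where
    "char w = conj_list (map (\<lambda>p. if w p then Atom p else FNeg (Atom p)) ps)" for w
  have "sat v (char w) \<longleftrightarrow> v = w" for v w
  proof -
    have "sat v (char w) \<longleftrightarrow> (\<forall>p. sat v (if w p then Atom p else FNeg (Atom p)))"
      unfolding char_def sat_conj_list set_map ps by blast
    also have "\<dots> \<longleftrightarrow> v = w"
      by (auto simp: fun_eq_iff)
    finally show ?thesis .
  qed
  then have "models (disj_list (map char ws)) = M"
    by (auto simp: models_def sat_disj_list ws)
  then show ?thesis ..
qed

lemma ex_interp_other_than:
  assumes "card (UNIV :: 'p::finite set) \<ge> 2"
  shows "\<exists>c :: 'p interp. c \<noteq> a \<and> c \<noteq> b"
proof -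
  have "\<not> card (UNIV :: 'p set) \<le> Suc 0"
    using assms by simp
  then obtain p q :: 'p where "p \<noteq> q"
    using card_le_Suc0_iff_eq[OF finite_UNIV] by blast
  then have "(\<lambda>_. True) \<noteq> (\<lambda>_. False)" "(\<lambda>_. True) \<noteq> (\<lambda>r. r = p)"
    "(\<lambda>_. False) \<noteq> (\<lambda>r::'p. r = p)"
    by (auto simp: fun_eq_iff)
  then show ?thesis
    by metis
qed

lemma society_singleton [simp]: "society {i}"
  by (simp add: society_def)

section \<open>Arrow's theorem for aggregated choice functions\<close>

text \<open>
  \<open>Ch N Phi S\<close> is what society \<open>N\<close> with profile \<open>Phi\<close> chooses from \<open>S\<close>, and \<open>pref E S\<close> what
  a single agent in state \<open>E\<close> chooses; choosing \<open>{x}\<close> from \<open>{x, y}\<close> is a strict preference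
  for \<open>x\<close>, choosing \<open>{x, y}\<close> indifference.
\<close>

locale arrovian_choice =
  fixes Ch :: "'a set \<Rightarrow> ('a \<Rightarrow> 'e) \<Rightarrow> 'w set \<Rightarrow> 'w set"
    and pref :: "'e \<Rightarrow> 'w set \<Rightarrow> 'w set"
  assumes Ch_subset: "society N \<Longrightarrow> S \<noteq> {} \<Longrightarrow> Ch N Phi S \<subseteq> S"
    and Ch_nonempty: "society N \<Longrightarrow> S \<noteq> {} \<Longrightarrow> Ch N Phi S \<noteq> {}"
    and Ch_restrict: "society N \<Longrightarrow> T \<subseteq> S \<Longrightarrow> Ch N Phi S \<inter> T \<noteq> {} \<Longrightarrow>
      Ch N Phi T = Ch N Phi S \<inter> T"
    and Ch_singleton: "Ch {i} Phi S = pref (Phi i) S"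
    and unanimity: "society N \<Longrightarrow> \<forall>i\<in>N. pref (Phi i) S = T \<Longrightarrow> Ch N Phi S = T"
    and pairwise_independence: "society N \<Longrightarrow>
      \<forall>i\<in>N. pref (Phi i) {x, y} = pref (Phi' i) {x, y} \<Longrightarrow>
      Ch N Phi {x, y} = Ch N Phi' {x, y}"
    and ex_pref_tie_strict: "a \<noteq> b \<Longrightarrow> b \<noteq> c \<Longrightarrow> a \<noteq> c \<Longrightarrow>
      \<exists>E. pref E {a, b} = {a, b} \<and> pref E {b, c} = {b}"
    and ex_pref_strict_tie: "a \<noteq> b \<Longrightarrow> b \<noteq> c \<Longrightarrow> a \<noteq> c \<Longrightarrow>
      \<exists>E. pref E {a, b} = {a} \<and> pref E {b, c} = {b, c}"
    and ex_pref_strict_strict: "a \<noteq> b \<Longrightarrow> b \<noteq> c \<Longrightarrow> a \<noteq> c \<Longrightarrow>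
      \<exists>E. pref E {a, b} = {a} \<and> pref E {b, c} = {b}"
    and three_alternatives: "\<exists>c. c \<noteq> a \<and> c \<noteq> b"
begin

lemma Ch_restrict_pair:
  "society N \<Longrightarrow> {u, v} \<subseteq> S \<Longrightarrow> w \<in> Ch N Phi S \<Longrightarrow> w \<in> {u, v} \<Longrightarrow>
    Ch N Phi {u, v} = Ch N Phi S \<inter> {u, v}"
  by (rule Ch_restrict) auto

lemma Ch_strict_weak_trans:
  assumes N: "society N" and "a \<noteq> b" "b \<noteq> c" "a \<noteq> c"
    and ab: "Ch N Phi {a, b} = {a}" and bc: "b \<in> Ch N Phi {b, c}"
  shows "Ch N Phi {a, c} = {a}"
proof -
  let ?D = "Ch N Phi {a, b, c}"
  have b: "b \<notin> ?D"
    using Ch_restrict_pair[OF N, of a b "{a, b, c}" b Phi] ab \<open>a \<noteq> b\<close> by auto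
  have c: "c \<notin> ?D"
    using Ch_restrict_pair[OF N, of b c "{a, b, c}" c Phi] bc b by auto
  have a: "a \<in> ?D"
    using Ch_subset[OF N, of "{a, b, c}" Phi] Ch_nonempty[OF N, of "{a, b, c}" Phi] b c by auto
  show ?thesis
    using Ch_restrict_pair[OF N, of a c "{a, b, c}" a Phi] a c by auto
qed

lemma Ch_weak_strict_trans:
  assumes N: "society N" and "a \<noteq> b" "b \<noteq> c" "a \<noteq> c"
    and ab: "a \<in> Ch N Phi {a, b}" and bc: "Ch N Phi {b, c} = {b}"
  shows "Ch N Phi {a, c} = {a}"
proof -
  let ?D = "Ch N Phi {a, b, c}"
  have c: "c \<notin> ?D"
    using Ch_restrict_pair[OF N, of b c "{a, b, c}" c Phi] bc \<open>b \<noteq> c\<close> by auto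
  have a: "a \<in> ?D"
  proof (cases "b \<in> ?D")
    case True
    then show ?thesis
      using Ch_restrict_pair[OF N, of a b "{a, b, c}" b Phi] ab by auto
  next
    case False
    then show ?thesis
      using Ch_subset[OF N, of "{a, b, c}" Phi] Ch_nonempty[OF N, of "{a, b, c}" Phi] c by auto
  qed
  show ?thesis
    using Ch_restrict_pair[OF N, of a c "{a, b, c}" a Phi] a c by auto
qed

lemma pref_subset: "S \<noteq> {} \<Longrightarrow> pref E S \<subseteq> S"
  using Ch_subset[of "{undefined}" S "\<lambda>_. E"] by (simp add: Ch_singleton)

lemma pref_nonempty: "S \<noteq> {} \<Longrightarrow> pref E S \<noteq> {}"
  using Ch_nonempty[of "{undefined}" S "\<lambda>_. E"] by (simp add: Ch_singleton)

lemma pref_strict_weak_trans: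
  "a \<noteq> b \<Longrightarrow> b \<noteq> c \<Longrightarrow> a \<noteq> c \<Longrightarrow> pref E {a, b} = {a} \<Longrightarrow> b \<in> pref E {b, c} \<Longrightarrow>
    pref E {a, c} = {a}"
  using Ch_strict_weak_trans[of "{undefined}" a b c "\<lambda>_. E"] by (simp add: Ch_singleton)

lemma pref_weak_strict_trans:
  "a \<noteq> b \<Longrightarrow> b \<noteq> c \<Longrightarrow> a \<noteq> c \<Longrightarrow> a \<in> pref E {a, b} \<Longrightarrow> pref E {b, c} = {b} \<Longrightarrow>
    pref E {a, c} = {a}"
  using Ch_weak_strict_trans[of "{undefined}" a b c "\<lambda>_. E"] by (simp add: Ch_singleton)

lemma ex_pref_linear:
  assumes "x \<noteq> y" "y \<noteq> z" "x \<noteq> z"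
  shows "\<exists>E. pref E {x, y} = {x} \<and> pref E {y, z} = {y} \<and> pref E {x, z} = {x}"
proof -
  obtain E where "pref E {x, y} = {x}" "pref E {y, z} = {y}"
    using ex_pref_strict_strict[OF assms] by blast
  with assms show ?thesis
    using pref_strict_weak_trans[of x y z E] by auto
qed

lemma ex_pref_top:
  assumes "x \<noteq> y" "y \<noteq> z" "x \<noteq> z" and D: "D \<subseteq> {x, z}" "D \<noteq> {}"
  shows "\<exists>E. pref E {x, z} = D \<and> pref E {y, x} = {y} \<and> pref E {y, z} = {y}"
proof -
  consider "D = {x}" | "D = {z}" | "D = {x, z}"
    using D by blast
  then show ?thesis
  proof cases
    case 1
    obtain E where "pref E {y, x} = {y}" "pref E {x, z} = {x}"
      using ex_pref_strict_strict[of y x z] assms by blast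
    with 1 assms show ?thesis
      using pref_strict_weak_trans[of y x z E] by auto
  next
    case 2
    obtain E where "pref E {y, z} = {y}" "pref E {z, x} = {z}"
      using ex_pref_strict_strict[of y z x] assms by blast
    with 2 assms show ?thesis
      using pref_strict_weak_trans[of y z x E] by (auto simp: insert_commute)
  next
    case 3
    obtain E where "pref E {y, x} = {y}" "pref E {x, z} = {x, z}"
      using ex_pref_strict_tie[of y x z] assms by blast
    with 3 assms show ?thesis
      using pref_strict_weak_trans[of y x z E] by auto
  qed
qed

lemma ex_pref_bottom:
  assumes "w \<noteq> x" "x \<noteq> y" "w \<noteq> y" and D: "D \<subseteq> {w, y}" "D \<noteq> {}"
  shows "\<exists>E. pref E {w, y} = D \<and> pref E {w, x} = {w} \<and> pref E {y, x} = {y}"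
proof -
  consider "D = {w}" | "D = {y}" | "D = {w, y}"
    using D by blast
  then show ?thesis
  proof cases
    case 1
    obtain E where "pref E {w, y} = {w}" "pref E {y, x} = {y}"
      using ex_pref_strict_strict[of w y x] assms by blast
    with 1 assms show ?thesis
      using pref_strict_weak_trans[of w y x E] by auto
  next
    case 2
    obtain E where "pref E {y, w} = {y}" "pref E {w, x} = {w}"
      using ex_pref_strict_strict[of y w x] assms by blast
    with 2 assms show ?thesis
      using pref_strict_weak_trans[of y w x E] by (auto simp: insert_commute)
  next
    case 3
    obtain E where "pref E {w, y} = {w, y}" "pref E {y, x} = {y}"
      using ex_pref_tie_strict[of w y x] assms by blast
    with 3 assms show ?thesis
      using pref_weak_strict_trans[of w y x E] by auto
  qed
qed

definition decisive :: "'a set \<Rightarrow> 'a set \<Rightarrow> 'w \<Rightarrow> 'w \<Rightarrow> bool" where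
  "decisive N G x y \<longleftrightarrow>
    (\<forall>Phi. (\<forall>i\<in>G. pref (Phi i) {x, y} = {x}) \<longrightarrow> Ch N Phi {x, y} = {x})"

definition almost_decisive :: "'a set \<Rightarrow> 'a set \<Rightarrow> 'w \<Rightarrow> 'w \<Rightarrow> bool" where
  "almost_decisive N G x y \<longleftrightarrow>
    (\<forall>Phi. (\<forall>i\<in>G. pref (Phi i) {x, y} = {x}) \<and> (\<forall>i\<in>N - G. pref (Phi i) {x, y} = {y}) \<longrightarrow>
      Ch N Phi {x, y} = {x})"

lemma decisive_imp_almost_decisive: "decisive N G x y \<Longrightarrow> almost_decisive N G x y"
  unfolding decisive_def almost_decisive_def by blast

lemma decisive_new_loser:
  assumes N: "society N" and xyz: "x \<noteq> y" "y \<noteq> z" "x \<noteq> z"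
    and G: "almost_decisive N G x y"
  shows "decisive N G x z"
  unfolding decisive_def
proof (intro allI impI)
  fix Phi
  assume Phi: "\<forall>i\<in>G. pref (Phi i) {x, z} = {x}"
  have "\<exists>E. pref E {x, z} = pref (Phi i) {x, z} \<and> pref E {y, z} = {y} \<and>
      pref E {x, y} = (if i \<in> G then {x} else {y})" for i
  proof (cases "i \<in> G")
    case True
    then show ?thesis
      using ex_pref_linear[OF xyz] Phi by auto
  next
    case False
    then show ?thesis
      using ex_pref_top[OF xyz pref_subset pref_nonempty, of "Phi i"] by (auto simp: insert_commute)
  qed
  then obtain Psi where Psi: "\<And>i. pref (Psi i) {x, z} = pref (Phi i) {x, z} \<and>
      pref (Psi i) {y, z} = {y} \<and> pref (Psi i) {x, y} = (if i \<in> G then {x} else {y})"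
    by metis
  have "Ch N Psi {x, y} = {x}"
    using G Psi unfolding almost_decisive_def by simp
  moreover have "Ch N Psi {y, z} = {y}"
    using unanimity[OF N] Psi by simp
  ultimately have "Ch N Psi {x, z} = {x}"
    using Ch_strict_weak_trans[OF N xyz] by simp
  then show "Ch N Phi {x, z} = {x}"
    using pairwise_independence[OF N, of Phi x z Psi] Psi by simp
qed

lemma decisive_new_winner:
  assumes N: "society N" and wxy: "w \<noteq> x" "x \<noteq> y" "w \<noteq> y"
    and G: "almost_decisive N G x y"
  shows "decisive N G w y"
  unfolding decisive_def
proof (intro allI impI)
  fix Phi
  assume Phi: "\<forall>i\<in>G. pref (Phi i) {w, y} = {w}"
  have "\<exists>E. pref E {w, y} = pref (Phi i) {w, y} \<and> pref E {w, x} = {w} \<and>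
      pref E {x, y} = (if i \<in> G then {x} else {y})" for i
  proof (cases "i \<in> G")
    case True
    then show ?thesis
      using ex_pref_linear[OF wxy] Phi by auto
  next
    case False
    then show ?thesis
      using ex_pref_bottom[OF wxy pref_subset pref_nonempty, of "Phi i"] by (auto simp: insert_commute)
  qed
  then obtain Psi where Psi: "\<And>i. pref (Psi i) {w, y} = pref (Phi i) {w, y} \<and>
      pref (Psi i) {w, x} = {w} \<and> pref (Psi i) {x, y} = (if i \<in> G then {x} else {y})"
    by metis
  have "Ch N Psi {w, x} = {w}"
    using unanimity[OF N] Psi by simp
  moreover have "Ch N Psi {x, y} = {x}"
    using G Psi unfolding almost_decisive_def by simp
  ultimately have "Ch N Psi {w, y} = {w}"
    using Ch_strict_weak_trans[OF N wxy] by simp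
  then show "Ch N Phi {w, y} = {w}"
    using pairwise_independence[OF N, of Phi w y Psi] Psi by simp
qed

lemma field_expansion:
  assumes N: "society N" and G: "almost_decisive N G x y" "x \<noteq> y" and "a \<noteq> b"
  shows "decisive N G a b"
proof -
  have from_x: "decisive N G x c" if "c \<noteq> x" for c
  proof (cases "c = y")
    case True
    obtain z where "z \<noteq> x" "z \<noteq> y"
      using three_alternatives by blast
    then have "decisive N G x z"
      using decisive_new_loser[OF N _ _ _ G(1)] G(2) by auto
    then show ?thesis
      using decisive_new_loser[OF N, of x z y G] decisive_imp_almost_decisive True G(2)
        \<open>z \<noteq> x\<close> \<open>z \<noteq> y\<close>
      by auto
  next
    case False
    then show ?thesis
      using decisive_new_loser[OF N _ _ _ G(1)] that G(2) by auto
  qed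
  show ?thesis
  proof (cases "a = x")
    case True
    then show ?thesis
      using from_x \<open>a \<noteq> b\<close> by auto
  next
    case a_x: False
    show ?thesis
    proof (cases "b = x")
      case True
      obtain z where z: "z \<noteq> a" "z \<noteq> x"
        using three_alternatives by blast
      have "decisive N G a z"
        using decisive_new_winner[OF N _ _ _ decisive_imp_almost_decisive[OF from_x]] z a_x
        by auto
      then show ?thesis
        using decisive_new_loser[OF N, of a z x G] decisive_imp_almost_decisive z a_x True by auto
    next
      case False
      then show ?thesis
        using decisive_new_winner[OF N _ _ _ decisive_imp_almost_decisive[OF from_x]] a_x \<open>a \<noteq> b\<close>
        by auto
    qed
  qed
qed

definition globally_decisive :: "'a set \<Rightarrow> 'a set \<Rightarrow> bool" where
  "globally_decisive N G \<longleftrightarrow> (\<forall>a b. a \<noteq> b \<longrightarrow> decisive N G a b)"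

lemma almost_decisive_imp_globally_decisive:
  "society N \<Longrightarrow> almost_decisive N G x y \<Longrightarrow> x \<noteq> y \<Longrightarrow> globally_decisive N G"
  unfolding globally_decisive_def using field_expansion by blast

lemma group_contraction:
  assumes N: "society N" and G: "globally_decisive N (G1 \<union> G2)" "G1 \<inter> G2 = {}"
  shows "globally_decisive N G1 \<or> globally_decisive N G2"
proof -
  fix x :: 'w
  obtain y where "y \<noteq> x"
    using three_alternatives[of x x] by blast
  moreover obtain z where "z \<noteq> x" "z \<noteq> y"
    using three_alternatives by blast
  ultimately have xyz: "x \<noteq> y" "y \<noteq> z" "x \<noteq> z"
    by auto
  obtain E1 where E1: "pref E1 {x, y} = {x}" "pref E1 {y, z} = {y}" "pref E1 {x, z} = {x}"
    using ex_pref_linear[OF xyz] by blast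
  obtain E2 where E2: "pref E2 {x, y} = {x}" "pref E2 {y, z} = {z}" "pref E2 {x, z} = {z}"
    using ex_pref_linear[of z x y] xyz by (auto simp: insert_commute)
  obtain E3 where E3: "pref E3 {x, y} = {y}" "pref E3 {y, z} = {y}" "pref E3 {x, z} = {z}"
    using ex_pref_linear[of y z x] xyz by (auto simp: insert_commute)
  define Psi where "Psi i = (if i \<in> G1 then E1 else if i \<in> G2 then E2 else E3)" for i
  have "\<forall>i\<in>G1 \<union> G2. pref (Psi i) {x, y} = {x}"
    using E1 E2 by (auto simp: Psi_def)
  then have Psi_xy: "Ch N Psi {x, y} = {x}"
    using G(1) xyz unfolding globally_decisive_def decisive_def by blast
  consider "Ch N Psi {y, z} = {z}" | "y \<in> Ch N Psi {y, z}"
    using Ch_subset[OF N, of "{y, z}" Psi] Ch_nonempty[OF N, of "{y, z}" Psi] by blast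
  then show ?thesis
  proof cases
    case 1
    have "almost_decisive N G2 z y"
      unfolding almost_decisive_def
    proof (intro allI impI)
      fix Phi
      assume Phi: "(\<forall>i\<in>G2. pref (Phi i) {z, y} = {z}) \<and> (\<forall>i\<in>N - G2. pref (Phi i) {z, y} = {y})"
      have "pref (Phi i) {y, z} = pref (Psi i) {y, z}" if "i \<in> N" for i
        using Phi G(2) E1 E2 E3 that by (auto simp: Psi_def insert_commute)
      then show "Ch N Phi {z, y} = {z}"
        using pairwise_independence[OF N, of Phi y z Psi] 1 by (simp add: insert_commute)
    qed
    then show ?thesis
      using almost_decisive_imp_globally_decisive[OF N] xyz by blast
  next
    case 2
    have Psi_xz: "Ch N Psi {x, z} = {x}"
      using Ch_strict_weak_trans[OF N xyz Psi_xy 2] .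
    have "almost_decisive N G1 x z"
      unfolding almost_decisive_def
    proof (intro allI impI)
      fix Phi
      assume Phi: "(\<forall>i\<in>G1. pref (Phi i) {x, z} = {x}) \<and> (\<forall>i\<in>N - G1. pref (Phi i) {x, z} = {z})"
      have "pref (Phi i) {x, z} = pref (Psi i) {x, z}" if "i \<in> N" for i
        using Phi E1 E2 E3 that by (auto simp: Psi_def)
      then show "Ch N Phi {x, z} = {x}"
        using pairwise_independence[OF N, of Phi x z Psi] Psi_xz by simp
    qed
    then show ?thesis
      using almost_decisive_imp_globally_decisive[OF N] xyz by blast
  qed
qed

lemma globally_decisive_society: "society N \<Longrightarrow> globally_decisive N N"
  unfolding globally_decisive_def decisive_def using unanimity by blast

lemma ex_decisive_singleton:
  assumes N: "society N"
  shows "\<exists>d\<in>N. globally_decisive N {d}"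
proof -
  have "G \<subseteq> N \<Longrightarrow> globally_decisive N G \<Longrightarrow> \<exists>d\<in>G. globally_decisive N {d}"
    if "finite G" "G \<noteq> {}" for G
    using that
  proof (induction G rule: finite_ne_induct)
    case (singleton i)
    then show ?case
      by blast
  next
    case (insert i G)
    then have "globally_decisive N {i} \<or> globally_decisive N G"
      using group_contraction[OF N, of "{i}" G] by simp
    then show ?case
      using insert by blast
  qed
  then show ?thesis
    using N globally_decisive_society[OF N] unfolding society_def by blast
qed

lemma ex_dictator:
  assumes N: "society N"
  shows "\<exists>d\<in>N. \<forall>Phi S. S \<noteq> {} \<longrightarrow> Ch N Phi S \<subseteq> pref (Phi d) S"
proof -
  obtain d where d: "d \<in> N" "globally_decisive N {d}"
    using ex_decisive_singleton[OF N] by blast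
  have "Ch N Phi S \<subseteq> pref (Phi d) S" if S: "S \<noteq> {}" for Phi S
  proof
    fix x
    assume x: "x \<in> Ch N Phi S"
    show "x \<in> pref (Phi d) S"
    proof (rule ccontr)
      assume x_rejected: "x \<notin> pref (Phi d) S"
      obtain y where y: "y \<in> pref (Phi d) S"
        using pref_nonempty[OF S] by blast
      have xy: "x \<in> S" "y \<in> S" "x \<noteq> y"
        using x y x_rejected Ch_subset[OF N S] pref_subset[OF S] by auto
      have "pref (Phi d) {y, x} = {y}"
        using Ch_restrict_pair[of "{d}" y x S y Phi] xy y x_rejected by (auto simp: Ch_singleton)
      then have "Ch N Phi {y, x} = {y}"
        using d(2) xy unfolding globally_decisive_def decisive_def by auto
      moreover have "Ch N Phi {y, x} = Ch N Phi S \<inter> {y, x}"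
        using Ch_restrict_pair[OF N, of y x S x Phi] xy x by auto
      ultimately show False
        using x xy by auto
    qed
  qed
  then show ?thesis
    using d(1) by blast
qed

end

section \<open>Fusion operators as aggregated choice functions\<close>

locale basic_fusion =
  fixes B :: "'e \<Rightarrow> 'p::finite form"
    and nabla :: "'a::linorder set \<Rightarrow> ('a \<Rightarrow> 'e) \<Rightarrow> 'e \<Rightarrow> 'e"
  assumes epistemic_space: "epistemic_space B"
    and es_basic_fusion: "es_basic_fusion B nabla"
begin

lemma models_B_nonempty: "models (B E) \<noteq> {}"
  using epistemic_space by (simp add: epistemic_space_def consistent_iff_models_nonempty)

lemma ex_models_B_eq: "M \<noteq> {} \<Longrightarrow> \<exists>E. models (B E) = M"
  using epistemic_space ex_form_models[of M]
  by (metis epistemic_space_def consistent_iff_models_nonempty equiv_form_iff_models_eq)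

text \<open>No state has an inconsistent belief base, so \<open>state {}\<close> is an arbitrary junk value.\<close>

definition state :: "'p interp set \<Rightarrow> 'e" where
  "state M = (SOME E. models (B E) = M)"

lemma models_state: "M \<noteq> {} \<Longrightarrow> models (B (state M)) = M"
  unfolding state_def by (rule someI_ex[OF ex_models_B_eq])

lemma models_fusion_subset: "society N \<Longrightarrow> models (B (nabla N Phi E)) \<subseteq> models (B E)"
  using es_basic_fusion by (simp add: es_basic_fusion_def entails_iff_models_subset)

lemma models_fusion_cong:
  "society N \<Longrightarrow> society M \<Longrightarrow> equiv_profile N Phi M Psi \<Longrightarrow> models (B E) = models (B E') \<Longrightarrow>
    models (B (nabla N Phi E)) = models (B (nabla M Psi E'))"
  using es_basic_fusion by (simp add: es_basic_fusion_def equiv_form_iff_models_eq)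

lemma models_fusion_restrict:
  assumes "society N" "models (B E) = models (B E') \<inter> models (B E'')"
    and "models (B (nabla N Phi E')) \<inter> models (B E'') \<noteq> {}"
  shows "models (B (nabla N Phi E)) = models (B (nabla N Phi E')) \<inter> models (B E'')"
proof -
  have "equiv_form (B E) (FConj (B E') (B E''))"
    using assms(2) by (simp add: equiv_form_iff_models_eq)
  then have "entails (FConj (B (nabla N Phi E')) (B E'')) (B (nabla N Phi E))"
    and "consistent (FConj (B (nabla N Phi E')) (B E'')) \<Longrightarrow>
      entails (B (nabla N Phi E)) (FConj (B (nabla N Phi E')) (B E''))"
    using es_basic_fusion assms(1) unfolding es_basic_fusion_def by blast+
  then show ?thesis
    using assms(3) by (auto simp: entails_iff_models_subset consistent_iff_models_nonempty)
qed

definition fused :: "'a set \<Rightarrow> ('a \<Rightarrow> 'e) \<Rightarrow> 'p interp set \<Rightarrow> 'p interp set" where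
  "fused N Phi M = models (B (nabla N Phi (state M)))"

text \<open>By ESF2 a single-agent fusion does not depend on the agent, so any agent will do here.\<close>

definition indiv :: "'e \<Rightarrow> 'p interp set \<Rightarrow> 'p interp set" where
  "indiv E M = fused {undefined} (\<lambda>_. E) M"

lemma models_fusion_eq_fused:
  "society N \<Longrightarrow> models (B (nabla N Phi E)) = fused N Phi (models (B E))"
  unfolding fused_def
  by (rule models_fusion_cong) (simp_all add: equiv_profile_def models_state models_B_nonempty)

lemma fused_singleton: "fused {i} Phi M = indiv (Phi i) M"
  unfolding indiv_def fused_def
  by (rule models_fusion_cong) (simp_all add: equiv_profile_def)

lemma fused_subset: "society N \<Longrightarrow> M \<noteq> {} \<Longrightarrow> fused N Phi M \<subseteq> M"
  using models_fusion_subset models_state by (metis fused_def)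

lemma fused_nonempty: "fused N Phi M \<noteq> {}"
  by (simp add: fused_def models_B_nonempty)

lemma fused_restrict:
  assumes "society N" "T \<subseteq> S" "fused N Phi S \<inter> T \<noteq> {}"
  shows "fused N Phi T = fused N Phi S \<inter> T"
proof -
  have "S \<noteq> {}" "T \<noteq> {}"
    using assms(2,3) by auto
  then show ?thesis
    using models_fusion_restrict[OF assms(1), of "state T" "state S" "state T" Phi] assms(2,3)
    by (auto simp: fused_def models_state)
qed

lemma fused_singleton_set: "society N \<Longrightarrow> fused N Phi {x} = {x}"
  using fused_subset[of N "{x}" Phi] fused_nonempty[of N Phi "{x}"] by blast

lemma fused_unanimity:
  assumes "esf7 B nabla" "esf8w B nabla" "society N" "\<forall>i\<in>N. indiv (Phi i) S = T"
  shows "fused N Phi S = T"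
proof -
  have "finite N" "N \<noteq> {}"
    using assms(3) by (auto simp: society_def)
  then show ?thesis
    using assms(4)
  proof (induction N rule: finite_ne_induct)
    case (singleton i)
    then show ?case
      by (simp add: fused_singleton)
  next
    case (insert i N)
    have society: "society (insert i N)" and partition: "partition2 (insert i N) {i} N"
      using insert.hyps by (auto simp: society_def partition2_def)
    have "fused {i} Phi S = T" "fused N Phi S = T"
      using insert by (simp_all add: fused_singleton)
    moreover note esf7 = assms(1)[unfolded esf7_def, rule_format, OF society partition, of Phi "state S"]
    moreover note esf8w = assms(2)[unfolded esf8w_def, rule_format, OF society partition, of Phi "state S"]
    ultimately show ?case
      using fused_nonempty[of N Phi S]
      by (fastforce simp: fused_def entails_iff_models_subset consistent_iff_models_nonempty)
  qed
qed

lemma fused_pairwise_independence: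
  assumes "esf_i B nabla" "society N" and agree: "\<forall>j\<in>N. indiv (Phi j) {x, y} = indiv (Phi' j) {x, y}"
  shows "fused N Phi {x, y} = fused N Phi' {x, y}"
proof -
  have "equiv_form (B (nabla N Phi (state {x, y}))) (B (nabla N Phi' (state {x, y})))"
  proof (rule assms(1)[unfolded esf_i_def, rule_format, OF assms(2)])
    fix E j
    assume "entails (B E) (B (state {x, y}))" and j: "j \<in> N"
    then have "models (B E) = {x} \<or> models (B E) = {y} \<or> models (B E) = {x, y}"
      using models_B_nonempty[of E] models_state[of "{x, y}"]
      by (auto simp: entails_iff_models_subset)
    then have "indiv (Phi j) (models (B E)) = indiv (Phi' j) (models (B E))"
      using agree j fused_singleton_set[of "{j}"] fused_singleton by (metis society_singleton)
    then show "equiv_form (B (nabla {j} (\<lambda>_. Phi j) E)) (B (nabla {j} (\<lambda>_. Phi' j) E))"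
      by (simp add: equiv_form_iff_models_eq models_fusion_eq_fused fused_singleton)
  qed
  then show ?thesis
    by (simp add: fused_def equiv_form_iff_models_eq)
qed

lemma indiv_rich_domain:
  assumes "esf_sd B nabla" "a \<noteq> b" "b \<noteq> c" "a \<noteq> c"
  shows "(\<exists>E. indiv E {a, b} = {a, b} \<and> indiv E {b, c} = {b}) \<and>
    (\<exists>E. indiv E {a, b} = {a} \<and> indiv E {b, c} = {b, c}) \<and>
    (\<exists>E. indiv E {a, b} = {a} \<and> indiv E {b, c} = {b})"
  using assms(1)[unfolded esf_sd_def, rule_format, of a b c "state {a, b}" "state {b, c}" undefined]
    assms(2-4)
  by (simp add: models_state indiv_def fused_def)

lemma arrovian_choice_fused:
  assumes "card (UNIV :: 'p set) \<ge> 2" "esf_sd B nabla" "esf7 B nabla" "esf8w B nabla" "esf_i B nabla"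
  shows "arrovian_choice fused indiv"
proof (unfold_locales, goal_cases)
  case 1 then show ?case by (rule fused_subset)
next
  case 2 show ?case by (rule fused_nonempty)
next
  case 3 then show ?case by (rule fused_restrict)
next
  case 4 then show ?case by (rule fused_singleton)
next
  case 5 then show ?case by (rule fused_unanimity[OF assms(3,4)])
next
  case 6 then show ?case by (rule fused_pairwise_independence[OF assms(5)])
next
  case 7 then show ?case using indiv_rich_domain[OF assms(2)] by blast
next
  case 8 then show ?case using indiv_rich_domain[OF assms(2)] by blast
next
  case 9 then show ?case using indiv_rich_domain[OF assms(2)] by blast
next
  case 10 then show ?case by (rule ex_interp_other_than[OF assms(1)])
qed

lemma esf_d_if_dictatorial:
  assumes "\<And>N. society N \<Longrightarrow> \<exists>d\<in>N. \<forall>Phi S. S \<noteq> {} \<longrightarrow> fused N Phi S \<subseteq> indiv (Phi d) S"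
  shows "esf_d B nabla"
  unfolding esf_d_def entails_iff_models_subset
proof (intro allI impI)
  fix N :: "'a set"
  assume "society N"
  then obtain d where d: "d \<in> N" "\<forall>Phi S. S \<noteq> {} \<longrightarrow> fused N Phi S \<subseteq> indiv (Phi d) S"
    using assms by blast
  have "models (B (nabla N Phi E)) \<subseteq> models (B (nabla {d} (\<lambda>_. Phi d) E))" for Phi E
    using d(2) \<open>society N\<close> models_B_nonempty[of E]
    by (simp add: models_fusion_eq_fused fused_singleton)
  then show "\<exists>d\<in>N. \<forall>Phi E. models (B (nabla N Phi E)) \<subseteq> models (B (nabla {d} (\<lambda>_. Phi d) E))"
    using d(1) by blast
qed

end

theorem corollary1:
  fixes B :: "'e \<Rightarrow> 'p::finite form"
    and nabla :: "'a::wellorder set \<Rightarrow> ('a \<Rightarrow> 'e) \<Rightarrow> 'e \<Rightarrow> 'e"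
  assumes "epistemic_space B"
    and "card (UNIV :: 'p set) \<ge> 2"
    and "es_basic_fusion B nabla"
    and "esf_sd B nabla"
    and "esf7 B nabla"
    and "esf8w B nabla"
    and "esf_i B nabla"
  shows "esf_d B nabla"
proof -
  interpret basic_fusion B nabla
    using assms(1,3) by unfold_locales
  interpret arrovian_choice fused indiv
    using arrovian_choice_fused assms(2,4-7) .
  show ?thesis
    using ex_dictator by (rule esf_d_if_dictatorial)
qed

end
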